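(* If $R$ is a GSWNC ring, then its Jacobson radical $J(R)$ is nil.
   Context: All rings are associative with identity. An element $a$ of a ring is strongly weakly nil-clean if there exist an idempotent $e$ and a nilpotent $q$ with $eq = qe$ such that $a = q + e$ or $a = q - e$. A ring is GSWNC if every non-invertible element is strongly weakly nil-clean. *)

theory Defs
  imports Main
begin

definition ring_unit :: "'a::ring_1 \<Rightarrow> bool" where
  "ring_unit a \<longleftrightarrow> (\<exists>b. a * b = 1 \<and> b * a = 1)"

definition idem_elt :: "'a::ring_1 \<Rightarrow> bool" where
  "idem_elt e \<longleftrightarrow> e * e = e"

definition nilpotent_elt :: "'a::ring_1 \<Rightarrow> bool" where
  "nilpotent_elt q \<longleftrightarrow> (\<exists>n::nat. q ^ n = 0)"

definition strongly_weakly_nil_clean :: "'a::ring_1 \<Rightarrow> bool" where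
  "strongly_weakly_nil_clean a \<longleftrightarrow>
     (\<exists>e q. idem_elt e \<and> nilpotent_elt q \<and> e * q = q * e \<and> (a = q + e \<or> a = q - e))"

definition GSWNC :: "'a::ring_1 itself \<Rightarrow> bool" where
  "GSWNC (_ :: 'a itself) \<longleftrightarrow>
     (\<forall>a::'a. \<not> ring_unit a \<longrightarrow> strongly_weakly_nil_clean a)"

definition left_ideal :: "'a::ring_1 set \<Rightarrow> bool" where
  "left_ideal I \<longleftrightarrow> 0 \<in> I \<and> (\<forall>x\<in>I. \<forall>y\<in>I. x + y \<in> I) \<and> (\<forall>x\<in>I. - x \<in> I)
     \<and> (\<forall>r x. x \<in> I \<longrightarrow> r * x \<in> I)"

definition maximal_left_ideal :: "'a::ring_1 set \<Rightarrow> bool" where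
  "maximal_left_ideal M \<longleftrightarrow> left_ideal M \<and> M \<noteq> UNIV \<and>
     (\<forall>I. left_ideal I \<and> M \<subseteq> I \<longrightarrow> I = M \<or> I = UNIV)"

definition jacobson_radical :: "'a::ring_1 set" where
  "jacobson_radical = \<Inter> {M. maximal_left_ideal M}"

definition nil_set :: "'a::ring_1 set \<Rightarrow> bool" where
  "nil_set S \<longleftrightarrow> (\<forall>x\<in>S. nilpotent_elt x)"

end

theory Submission
  imports Defs
begin

text \<open>Every element \<open>x\<close> of the Jacobson radical makes \<open>1 - x\<close> left invertible
  (otherwise \<open>R(1 - x)\<close> lies in a maximal left ideal, which also contains \<open>x\<close>), so the
  radical contains no idempotent other than \<open>0\<close> and no unit unless \<open>R\<close> is trivial.
  A non-unit \<open>x = q \<plusminus> e\<close> of the radical with \<open>eq = qe\<close> has \<open>e = (1 \<plusminus> q)\<^sup>-\<^sup>1 e (\<plusminus>x)\<close>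
  in the radical, hence \<open>e = 0\<close> and \<open>x = q\<close> is nilpotent.\<close>

lemma one_minus_mult_geometric_sum:
  fixes x :: "'a::ring_1"
  shows "(1 - x) * (\<Sum>i<n. x ^ i) = 1 - x ^ n"
proof (induction n)
  case (Suc n)
  have "(1 - x) * (\<Sum>i<Suc n. x ^ i) = (1 - x) * (\<Sum>i<n. x ^ i) + (1 - x) * x ^ n"
    by (simp add: distrib_left)
  also have "\<dots> = 1 - x * x ^ n" using Suc by (simp add: algebra_simps)
  finally show ?case by simp
qed simp

lemma geometric_sum_mult_one_minus:
  fixes x :: "'a::ring_1"
  shows "(\<Sum>i<n. x ^ i) * (1 - x) = 1 - x ^ n"
proof (induction n)
  case (Suc n)
  have "(\<Sum>i<Suc n. x ^ i) * (1 - x) = (\<Sum>i<n. x ^ i) * (1 - x) + x ^ n * (1 - x)"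
    by (simp add: distrib_right)
  also have "\<dots> = 1 - x ^ n * x" using Suc by (simp add: algebra_simps)
  finally show ?case by (simp add: power_commutes)
qed simp

lemma nilpotent_elt_uminus:
  fixes q :: "'a::ring_1"
  assumes "nilpotent_elt q"
  shows "nilpotent_elt (- q)"
  using assms unfolding nilpotent_elt_def by (metis mult_zero_right power_minus)

lemma nilpotent_elt_imp_ring_unit_one_plus:
  fixes q :: "'a::ring_1"
  assumes "nilpotent_elt q"
  shows "ring_unit (1 + q)"
proof -
  obtain n where "(- q) ^ n = 0"
    using nilpotent_elt_uminus[OF assms] unfolding nilpotent_elt_def by blast
  then have "(1 + q) * (\<Sum>i<n. (- q) ^ i) = 1" "(\<Sum>i<n. (- q) ^ i) * (1 + q) = 1"
    using one_minus_mult_geometric_sum[of "- q" n] geometric_sum_mult_one_minus[of "- q" n]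
    by simp_all
  then show ?thesis unfolding ring_unit_def by blast
qed

lemma left_ideal_left_multiples: "left_ideal {r * a | r. True}"
  unfolding left_ideal_def
proof (intro conjI ballI allI impI)
  show "0 \<in> {r * a | r. True}" by (metis (mono_tags) mem_Collect_eq mult_zero_left)
next
  fix x y assume "x \<in> {r * a | r. True}" "y \<in> {r * a | r. True}"
  then obtain r s where "x + y = (r + s) * a" by (auto simp: distrib_right)
  then show "x + y \<in> {r * a | r. True}" by blast
next
  fix x assume "x \<in> {r * a | r. True}"
  then obtain r where "- x = (- r) * a" by auto
  then show "- x \<in> {r * a | r. True}" by blast
next
  fix t x assume "x \<in> {r * a | r. True}"
  then obtain r where "t * x = (t * r) * a" by (auto simp: mult.assoc)
  then show "t * x \<in> {r * a | r. True}" by blast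
qed

lemma left_ideal_Union_chain:
  assumes "C \<noteq> {}" and "\<And>I. I \<in> C \<Longrightarrow> left_ideal I"
    and "\<And>I K. I \<in> C \<Longrightarrow> K \<in> C \<Longrightarrow> I \<subseteq> K \<or> K \<subseteq> I"
  shows "left_ideal (\<Union>C)"
  unfolding left_ideal_def
proof (intro conjI ballI allI impI)
  show "0 \<in> \<Union>C" using assms(1,2) unfolding left_ideal_def by blast
next
  fix a b assume "a \<in> \<Union>C" "b \<in> \<Union>C"
  then obtain I where "I \<in> C" "a \<in> I" "b \<in> I" using assms(3) by blast
  then show "a + b \<in> \<Union>C" using assms(2) unfolding left_ideal_def by blast
qed (use assms(2) in \<open>unfold left_ideal_def, blast+\<close>)

lemma left_ideal_one_imp_UNIV:
  assumes "left_ideal I" and "1 \<in> I"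
  shows "I = UNIV"
  using assms unfolding left_ideal_def by (metis UNIV_eq_I mult.right_neutral)

lemma left_ideal_imp_maximal_left_ideal:
  assumes "left_ideal I" and "1 \<notin> I"
  obtains M where "maximal_left_ideal M" and "I \<subseteq> M"
proof -
  define A where "A = {K. left_ideal K \<and> I \<subseteq> K \<and> 1 \<notin> K}"
  have "\<exists>M\<in>A. \<forall>K\<in>A. M \<subseteq> K \<longrightarrow> K = M"
  proof (rule subset_Zorn_nonempty)
    show "A \<noteq> {}" using assms unfolding A_def by blast
  next
    fix C assume "C \<noteq> {}" and "subset.chain A C"
    then show "\<Union>C \<in> A"
      using left_ideal_Union_chain[of C] unfolding A_def subset.chain_def by blast
  qed
  then obtain M where "M \<in> A" and M_max: "\<forall>K\<in>A. M \<subseteq> K \<longrightarrow> K = M" by blast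
  have "maximal_left_ideal M"
    unfolding maximal_left_ideal_def
  proof (intro conjI allI impI)
    show "left_ideal M" and "M \<noteq> UNIV" using \<open>M \<in> A\<close> unfolding A_def by auto
    fix K assume "left_ideal K \<and> M \<subseteq> K"
    then show "K = M \<or> K = UNIV"
      using M_max \<open>M \<in> A\<close> left_ideal_one_imp_UNIV[of K] unfolding A_def by blast
  qed
  with \<open>M \<in> A\<close> show thesis using that unfolding A_def by blast
qed

lemma left_ideal_jacobson_radical: "left_ideal (jacobson_radical :: 'a::ring_1 set)"
  unfolding left_ideal_def jacobson_radical_def maximal_left_ideal_def by auto

lemma jacobson_radical_mult_left:
  "x \<in> jacobson_radical \<Longrightarrow> r * x \<in> jacobson_radical"
  using left_ideal_jacobson_radical unfolding left_ideal_def by blast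

lemma jacobson_radical_uminus:
  "x \<in> jacobson_radical \<Longrightarrow> - x \<in> jacobson_radical"
  using left_ideal_jacobson_radical unfolding left_ideal_def by blast

lemma jacobson_radical_one_minus_left_invertible:
  fixes x :: "'a::ring_1"
  assumes "x \<in> jacobson_radical"
  shows "\<exists>y. y * (1 - x) = 1"
proof (rule ccontr)
  assume no_inverse: "\<nexists>y. y * (1 - x) = 1"
  let ?L = "{r * (1 - x) | r. True}"
  have "1 \<notin> ?L"
  proof
    assume "1 \<in> ?L"
    then obtain r where "1 = r * (1 - x)" by blast
    with no_inverse show False by metis
  qed
  then obtain M where M: "maximal_left_ideal M" and "?L \<subseteq> M"
    using left_ideal_imp_maximal_left_ideal[OF left_ideal_left_multiples] by blast
  moreover have "1 - x \<in> ?L" by (rule CollectI, rule exI[of _ 1], simp)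
  ultimately have "1 - x \<in> M" by blast
  moreover have "x \<in> M" using assms M unfolding jacobson_radical_def by blast
  moreover have M_ideal: "left_ideal M" using M unfolding maximal_left_ideal_def by blast
  ultimately have "(1 - x) + x \<in> M" unfolding left_ideal_def by blast
  then have "M = UNIV" using left_ideal_one_imp_UNIV[OF M_ideal] by simp
  then show False using M unfolding maximal_left_ideal_def by blast
qed

lemma idempotent_in_jacobson_radical_eq_0:
  fixes e :: "'a::ring_1"
  assumes "e \<in> jacobson_radical" and "idem_elt e"
  shows "e = 0"
proof -
  obtain y where y: "y * (1 - e) = 1"
    using jacobson_radical_one_minus_left_invertible[OF assms(1)] by blast
  have "(1 - e) * e = 0" using assms(2) unfolding idem_elt_def by (simp add: algebra_simps)
  then have "(y * (1 - e)) * e = 0" by (simp add: mult.assoc)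
  then show ?thesis using y by simp
qed

lemma ring_unit_in_jacobson_radical_eq_0:
  fixes x :: "'a::ring_1"
  assumes "x \<in> jacobson_radical" and "ring_unit x"
  shows "x = 0"
proof -
  obtain b where "b * x = 1" using assms(2) unfolding ring_unit_def by blast
  then have "(1::'a) \<in> jacobson_radical" using jacobson_radical_mult_left[OF assms(1)] by metis
  then have "(1::'a) = 0" using idempotent_in_jacobson_radical_eq_0[of 1] unfolding idem_elt_def by simp
  then show ?thesis by (metis mult_1 mult_zero_left)
qed

lemma strongly_nil_clean_in_jacobson_radical_idempotent_eq_0:
  fixes x :: "'a::ring_1"
  assumes "x \<in> jacobson_radical" and "idem_elt e" and "nilpotent_elt q"
    and "e * q = q * e" and "x = q + e"
  shows "e = 0"
proof -
  obtain w where w: "w * (1 + q) = 1"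
    using nilpotent_elt_imp_ring_unit_one_plus[OF assms(3)] unfolding ring_unit_def by blast
  have "e * x = e * (1 + q)" using assms(2,5) unfolding idem_elt_def by (simp add: algebra_simps)
  also have "\<dots> = (1 + q) * e" using assms(4) by (simp add: algebra_simps)
  finally have "w * (e * x) = e" using w by (simp add: mult.assoc[symmetric])
  then have "e \<in> jacobson_radical"
    using jacobson_radical_mult_left[OF jacobson_radical_mult_left[OF assms(1)]] by metis
  then show ?thesis using idempotent_in_jacobson_radical_eq_0 assms(2) by blast
qed

theorem lemma2p10:
  assumes "GSWNC TYPE('a::ring_1)"
  shows "nil_set (jacobson_radical :: 'a set)"
  unfolding nil_set_def
proof
  fix x :: 'a assume x: "x \<in> jacobson_radical"
  show "nilpotent_elt x"
  proof (cases "ring_unit x")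
    case True
    then show ?thesis using ring_unit_in_jacobson_radical_eq_0[OF x]
      unfolding nilpotent_elt_def by (metis power_one_right)
  next
    case False
    then obtain e q where e: "idem_elt e" and q: "nilpotent_elt q" and commute: "e * q = q * e"
      and "x = q + e \<or> - x = - q + e"
      using assms unfolding GSWNC_def strongly_weakly_nil_clean_def by force
    then consider "x = q + e" | "- x = - q + e" by blast
    then show ?thesis
    proof cases
      case 1
      then show ?thesis using strongly_nil_clean_in_jacobson_radical_idempotent_eq_0[OF x e q commute] q
        by simp
    next
      case 2
      then have "e = 0"
        using strongly_nil_clean_in_jacobson_radical_idempotent_eq_0[OF jacobson_radical_uminus[OF x] e
            nilpotent_elt_uminus[OF q]] commute by simp
      then show ?thesis using 2 q by simp
    qed
  qed
qed

end
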